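(* Let $f:\mathbb{F}_{2^n}\to\mathbb{F}_{2^n}$ be APN. Then \[|\mathrm{Im}(f)|\geq\begin{cases}\frac{2^n+1}{3} & n\text{ odd},\\ \frac{2^n+2}{3} & n \text{ even}.\end{cases}\] If $n$ is odd and $|\mathrm{Im}(f)|=\frac{2^n+1}{3}$, then $\omega(y_0)=2$ for one element $y_0\in\mathrm{Im}(f)$ and $\omega(y)=3$ for all $y\in\mathrm{Im}(f)\setminus\{y_0\}$. If $n$ is even and $|\mathrm{Im}(f)|=\frac{2^n+2}{3}$, then one of the following holds: 1. $\omega(y_0)=1$ for one element $y_0\in\mathrm{Im}(f)$ and $\omega(y)=3$ for all other $y\in\mathrm{Im}(f)$ (i.e. $f$ is almost-3-to-1); 2. $\omega(y_0)=\omega(y_1)=2$ for two elements $y_0,y_1\in\mathrm{Im}(f)$ and $\omega(y)=3$ for all other $y\in\mathrm{Im}(f)$; 3. $\omega(y_0)=\omega(y_1)=\omega(y_2)=2$ for three elements $y_0,y_1,y_2\in\mathrm{Im}(f)$, $\omega(y_3)=4$ for a unique further element $y_3\in\mathrm{Im}(f)$, and $\omega(y)=3$ for all other $y\in\mathrm{Im}(f)$.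
   Context: A map $f:\mathbb{F}_{2^n}\to\mathbb{F}_{2^n}$ is APN if for every $a\neq 0$ and every $b$ the equation $f(x+a)+f(x)=b$ has at most 2 solutions. $\omega(y)=|f^{-1}(\{y\})|$. $f$ is almost-3-to-1 if there is a unique element of $\mathrm{Im}(f)$ with exactly one preimage and every other element of $\mathrm{Im}(f)$ has exactly 3 preimages. *)

theory Defs
  imports Complex_Main
begin

definition apn :: "('a::{field,finite} \<Rightarrow> 'a) \<Rightarrow> bool" where
  "apn f \<longleftrightarrow> (\<forall>a b. a \<noteq> 0 \<longrightarrow> card {x. f (x + a) + f x = b} \<le> 2)"

definition omega :: "('a \<Rightarrow> 'b) \<Rightarrow> 'b \<Rightarrow> nat" where
  "omega f y = card (f -` {y})"

end

theory Submission
  imports Defs "HOL-Number_Theory.Residues"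
begin

text \<open>
  A field with \<open>2\<^sup>n\<close> elements has characteristic 2, so \<open>f x = f z\<close> with \<open>x \<noteq> z\<close> means
  \<open>f (x + a) + f x = 0\<close> for \<open>a = z - x \<noteq> 0\<close>; APN allows at most two such \<open>x\<close> per \<open>a\<close>.
  Hence the fibre sizes \<open>\<omega>\<close> of \<open>f\<close> satisfy \<open>\<Sum>\<omega> = q\<close> and \<open>\<Sum>\<omega>\<^sup>2 \<le> q + 2(q - 1)\<close>,
  where \<open>q = 2\<^sup>n\<close>. Summing the integer quadratic \<open>(\<omega> - 2)(\<omega> - 3) \<ge> 0\<close> over the
  image gives \<open>0 \<le> 2(3|Im f| - q - 1)\<close>; the bound follows since \<open>q \<equiv> 1 mod 3\<close> for even
  \<open>n\<close>. In the extremal cases the total of \<open>(\<omega> - 2)(\<omega> - 3)\<close> is 0 or 2, and as the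
  quadratic takes the value 0 only at 2, 3 and the value 2 only at 1, 4, the fibre sizes are
  then determined by counting.
\<close>

lemma CHAR_eq_2_if_card_power_of_2:
  assumes "card (UNIV :: 'a::{idom,finite} set) = 2 ^ n"
  shows "CHAR('a) = 2"
proof -
  have prime: "prime CHAR('a)"
    by (intro prime_CHAR_semidom finite_imp_CHAR_pos) simp
  moreover have "CHAR('a) dvd 2 ^ n"
    using CHAR_dvd_CARD[where 'a = 'a] assms by simp
  ultimately have "CHAR('a) dvd 2"
    using prime_dvd_power by blast
  then show ?thesis
    using prime two_is_prime_nat primes_dvd_imp_eq by blast
qed

lemma eq_iff_add_eq_0_if_CHAR_2:
  assumes "CHAR('a::ring_1) = 2"
  shows "u = v \<longleftrightarrow> u + v = (0::'a)"
proof -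
  have "v + v = 0"
    using of_nat_CHAR[where 'a = 'a] assms by (metis mult_2 mult_zero_left of_nat_numeral)
  then show ?thesis
    by (metis add_eq_0_iff2)
qed

lemma sum_omega:
  fixes f :: "'a::finite \<Rightarrow> 'b"
  shows "(\<Sum>y\<in>range f. omega f y) = card (UNIV :: 'a set)"
proof -
  have "card (UNIV :: 'a set) = card (\<Union>y\<in>range f. f -` {y})"
    by (rule arg_cong[where f = card]) auto
  also have "\<dots> = (\<Sum>y\<in>range f. omega f y)"
    unfolding omega_def by (rule card_UN_disjoint) auto
  finally show ?thesis ..
qed

lemma sum_omega_squared:
  fixes f :: "'a::finite \<Rightarrow> 'b"
  shows "(\<Sum>y\<in>range f. omega f y ^ 2)
     = card (UNIV :: 'a set) + card {(x, z). x \<noteq> z \<and> f x = f z}"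
proof -
  have "(\<Sum>y\<in>range f. omega f y ^ 2) = card (\<Union>y\<in>range f. f -` {y} \<times> f -` {y})"
    unfolding omega_def power2_eq_square card_cartesian_product[symmetric]
    by (rule card_UN_disjoint[symmetric]) auto
  also have "(\<Union>y\<in>range f. f -` {y} \<times> f -` {y})
      = range (\<lambda>x. (x, x)) \<union> {(x, z). x \<noteq> z \<and> f x = f z}"
    by auto
  also have "card \<dots> = card (UNIV :: 'a set) + card {(x, z). x \<noteq> z \<and> f x = f z}"
    by (subst card_Un_disjoint) (auto simp: card_image inj_on_def)
  finally show ?thesis .
qed

lemma apn_card_collisions_le:
  fixes f :: "'a::{field,finite} \<Rightarrow> 'a"
  assumes "CHAR('a) = 2" and "apn f"
  shows "card {(x, z). x \<noteq> z \<and> f x = f z} \<le> 2 * (card (UNIV :: 'a set) - 1)"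
proof -
  let ?Q = "SIGMA a:UNIV - {0}. {x. f (x + a) = f x}"
  have "{(x, z). x \<noteq> z \<and> f x = f z} \<subseteq> (\<lambda>(a, x). (x, x + a)) ` ?Q"
  proof safe
    fix x z assume "x \<noteq> z" "f x = f z"
    then show "(x, z) \<in> (\<lambda>(a, x). (x, x + a)) ` ?Q"
      by (intro rev_image_eqI[of "(z - x, x)"]) auto
  qed
  then have "card {(x, z). x \<noteq> z \<and> f x = f z} \<le> card ?Q"
    by (meson card_image_le card_mono finite le_trans)
  also have "\<dots> = (\<Sum>a\<in>UNIV - {0}. card {x. f (x + a) + f x = 0})"
    using eq_iff_add_eq_0_if_CHAR_2[OF assms(1)] by simp
  also have "\<dots> \<le> (\<Sum>a\<in>UNIV - {0::'a}. 2)"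
    using assms(2) unfolding apn_def by (intro sum_mono) simp
  also have "\<dots> = 2 * (card (UNIV :: 'a set) - 1)"
    by (simp add: card_Diff_singleton)
  finally show ?thesis .
qed

lemma apn_sum_omega_squared_le:
  fixes f :: "'a::{field,finite} \<Rightarrow> 'a"
  assumes "CHAR('a) = 2" and "apn f"
  shows "(\<Sum>y\<in>range f. omega f y ^ 2) + 2 \<le> 3 * card (UNIV :: 'a set)"
  using sum_omega_squared[of f] apn_card_collisions_le[OF assms]
    card_gt_0_iff[of "UNIV :: 'a set"] by simp

definition fibre_defect :: "nat \<Rightarrow> int" where
  "fibre_defect k = (int k - 2) * (int k - 3)"

lemma fibre_defect_values:
  "(k \<in> {2, 3} \<and> fibre_defect k = 0) \<or> (k \<in> {1, 4} \<and> fibre_defect k = 2) \<or> 6 \<le> fibre_defect k"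
proof (cases "k \<le> 4")
  case True
  then have "k \<in> {0, 1, 2, 3, 4}" by auto
  then show ?thesis by (auto simp: fibre_defect_def)
next
  case False
  then have "3 * 2 \<le> (int k - 2) * (int k - 3)" by (intro mult_mono) auto
  then show ?thesis by (simp add: fibre_defect_def)
qed

lemma fibre_defect_nonneg: "0 \<le> fibre_defect k"
  using fibre_defect_values[of k] by auto

lemma fibre_defect_eq_0_iff: "fibre_defect k = 0 \<longleftrightarrow> k = 2 \<or> k = 3"
  using fibre_defect_values[of k] by (auto simp: fibre_defect_def)

lemma sum_fibre_defect:
  "(\<Sum>y\<in>R. fibre_defect (w y))
     = int (\<Sum>y\<in>R. w y ^ 2) - 5 * int (sum w R) + 6 * int (card R)"
  by (simp add: fibre_defect_def algebra_simps power2_eq_square sum.distrib sum_subtractf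
      sum_distrib_left)

lemma sum_weights_2_3:
  assumes "finite S" and "\<forall>y\<in>S. w y = 2 \<or> w y = 3"
  shows "sum w S + card {y\<in>S. w y = 2} = 3 * card S"
proof -
  have "sum w S + card {y\<in>S. w y = 2} = (\<Sum>y\<in>S. w y + (if w y = 2 then 1 else 0))"
    using assms(1) by (simp add: sum.distrib sum.inter_filter[symmetric])
  also have "\<dots> = (\<Sum>y\<in>S. 3)"
    using assms(2) by (intro sum.cong) auto
  finally show ?thesis by simp
qed

locale bounded_second_moment =
  fixes R :: "'b set" and w :: "'b \<Rightarrow> nat" and q :: nat
  assumes finite_R: "finite R"
    and sum_w: "sum w R = q"
    and sum_w_squared_le: "(\<Sum>y\<in>R. w y ^ 2) + 2 \<le> 3 * q"
begin

lemma sum_fibre_defect_le: "(\<Sum>y\<in>R. fibre_defect (w y)) \<le> 6 * int (card R) - 2 * int q - 2"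
proof -
  have "int (\<Sum>y\<in>R. w y ^ 2) + 2 \<le> 3 * int q"
    using sum_w_squared_le by linarith
  moreover have "(\<Sum>y\<in>R. fibre_defect (w y))
      = int (\<Sum>y\<in>R. w y ^ 2) - 5 * int q + 6 * int (card R)"
    using sum_fibre_defect[of w R] sum_w by simp
  ultimately show ?thesis
    by linarith
qed

lemma card_lower_bound: "q + 1 \<le> 3 * card R"
  using sum_fibre_defect_le sum_nonneg[of R "\<lambda>y. fibre_defect (w y)"] fibre_defect_nonneg by force

lemma card_weight_2_outside:
  assumes "E \<subseteq> R" and "\<forall>y\<in>R - E. w y = 2 \<or> w y = 3"
  shows "card {y\<in>R - E. w y = 2} + q = 3 * card (R - E) + sum w E"
proof -
  have "sum w (R - E) + card {y\<in>R - E. w y = 2} = 3 * card (R - E)"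
    using finite_R assms(2) by (intro sum_weights_2_3) auto
  moreover have "q = sum w (R - E) + sum w E"
    using sum.subset_diff[OF assms(1) finite_R, of w] sum_w by simp
  ultimately show ?thesis
    by linarith
qed

lemma equality_case_q_plus_1:
  assumes "3 * card R = q + 1"
  shows "\<exists>y0\<in>R. w y0 = 2 \<and> (\<forall>y\<in>R - {y0}. w y = 3)"
proof -
  have "(\<Sum>y\<in>R. fibre_defect (w y)) = 0"
    using sum_fibre_defect_le assms sum_nonneg[of R "\<lambda>y. fibre_defect (w y)"] fibre_defect_nonneg by force
  then have two_three: "\<forall>y\<in>R. w y = 2 \<or> w y = 3"
    using finite_R fibre_defect_nonneg by (simp add: sum_nonneg_eq_0_iff fibre_defect_eq_0_iff)
  then have "card {y\<in>R. w y = 2} = 1"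
    using card_weight_2_outside[of "{}"] assms by simp
  then obtain y0 where "{y\<in>R. w y = 2} = {y0}"
    by (rule card_1_singletonE)
  then show ?thesis
    using two_three by blast
qed

lemma at_most_one_exception:
  assumes "3 * card R = q + 2"
  obtains "\<forall>y\<in>R. w y = 2 \<or> w y = 3"
    | e where "e \<in> R" and "w e = 1 \<or> w e = 4" and "\<forall>y\<in>R - {e}. w y = 2 \<or> w y = 3"
proof -
  define E where "E = {y\<in>R. fibre_defect (w y) \<noteq> 0}"
  have "finite E"
    using finite_R by (simp add: E_def)
  have "(\<Sum>y\<in>E. fibre_defect (w y)) = (\<Sum>y\<in>R. fibre_defect (w y))"
    unfolding E_def using finite_R by (intro sum.mono_neutral_left) auto
  also have "\<dots> \<le> 2"
    using sum_fibre_defect_le assms by linarith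
  finally have sum_E: "(\<Sum>y\<in>E. fibre_defect (w y)) \<le> 2" .
  have ge_2: "2 \<le> fibre_defect (w y)" if "y \<in> E" for y
    using that fibre_defect_values[of "w y"] by (auto simp: E_def)
  have "2 * int (card E) \<le> (\<Sum>y\<in>E. fibre_defect (w y))"
    using sum_bounded_below[of E 2 "\<lambda>y. fibre_defect (w y)"] ge_2 by (simp add: mult.commute)
  then have "card E \<le> 1"
    using sum_E by linarith
  then consider "E = {}" | e where "E = {e}"
    using \<open>finite E\<close> by (metis card_0_eq card_1_singletonE le_SucE le_zero_eq One_nat_def)
  then show ?thesis
  proof cases
    case 1
    then show ?thesis
      using that(1) fibre_defect_eq_0_iff by (auto simp: E_def)
  next
    case (2 e)
    then have "fibre_defect (w e) \<le> 2" and "e \<in> R"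
      using sum_E by (auto simp: E_def)
    then have "w e = 1 \<or> w e = 4"
      using fibre_defect_values[of "w e"] 2 by (auto simp: E_def)
    moreover have "\<forall>y\<in>R - {e}. w y = 2 \<or> w y = 3"
      using 2 fibre_defect_eq_0_iff by (auto simp: E_def)
    ultimately show ?thesis
      using that(2) \<open>e \<in> R\<close> by blast
  qed
qed

lemma equality_case_q_plus_2:
  assumes "3 * card R = q + 2"
  shows "(\<exists>y0\<in>R. w y0 = 1 \<and> (\<forall>y\<in>R - {y0}. w y = 3))
       \<or> (\<exists>y0\<in>R. \<exists>y1\<in>R. y0 \<noteq> y1 \<and> w y0 = 2 \<and> w y1 = 2 \<and>
            (\<forall>y\<in>R - {y0, y1}. w y = 3))
       \<or> (\<exists>y0\<in>R. \<exists>y1\<in>R. \<exists>y2\<in>R. \<exists>y3\<in>R. distinct [y0, y1, y2, y3] \<and>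
            w y0 = 2 \<and> w y1 = 2 \<and> w y2 = 2 \<and> w y3 = 4 \<and>
            (\<forall>y\<in>R - {y0, y1, y2, y3}. w y = 3))"
  using assms
proof (cases rule: at_most_one_exception)
  case 1
  then have "card {y\<in>R. w y = 2} = 2"
    using card_weight_2_outside[of "{}"] assms by simp
  then obtain a b where "{y\<in>R. w y = 2} = {a, b}" and "a \<noteq> b"
    by (auto simp: card_2_iff)
  then show ?thesis
    using 1 by blast
next
  case (2 e)
  have "card {y\<in>R - {e}. w y = 2} + q = 3 * (card R - 1) + w e"
    using card_weight_2_outside[of "{e}"] 2 finite_R by simp
  then have twos: "card {y\<in>R - {e}. w y = 2} + 1 = w e"
    using assms by linarith
  from 2(2) show ?thesis
  proof
    assume "w e = 1"
    then have "{y\<in>R - {e}. w y = 2} = {}"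
      using twos finite_R by simp
    then show ?thesis
      using 2 \<open>w e = 1\<close> by blast
  next
    assume "w e = 4"
    then obtain a b c where "{y\<in>R - {e}. w y = 2} = {a, b, c}"
        and "a \<noteq> b" "b \<noteq> c" "a \<noteq> c"
      using twos card_3_iff[of "{y\<in>R - {e}. w y = 2}"] by auto
    moreover have "a \<noteq> e" "b \<noteq> e" "c \<noteq> e" "a \<in> R" "b \<in> R" "c \<in> R"
      using calculation(1) by blast+
    moreover have "\<forall>y\<in>R - {a, b, c, e}. w y = 3"
      using calculation(1) 2(3) by blast
    ultimately have "distinct [a, b, c, e] \<and> w a = 2 \<and> w b = 2 \<and> w c = 2 \<and> w e = 4 \<and>
        (\<forall>y\<in>R - {a, b, c, e}. w y = 3)"
      using \<open>w e = 4\<close> by auto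
    then show ?thesis
      using \<open>a \<in> R\<close> \<open>b \<in> R\<close> \<open>c \<in> R\<close> 2(1) by blast
  qed
qed

end

lemma power_2_mod_3_if_even:
  assumes "even n"
  shows "(2::nat) ^ n mod 3 = 1"
proof -
  obtain k where "n = 2 * k"
    using assms by blast
  then have "(2::nat) ^ n mod 3 = 4 ^ k mod 3"
    by (simp add: power_mult)
  also have "\<dots> = (4 mod 3) ^ k mod 3"
    by (simp only: power_mod)
  finally show ?thesis
    by simp
qed

theorem theorem4p2:
  fixes f :: "'a::{field,finite} \<Rightarrow> 'a" and n :: nat
  assumes card: "card (UNIV :: 'a set) = 2 ^ n"
    and apn: "apn f"
  shows "(odd n \<longrightarrow> real (card (range f)) \<ge> (2 ^ n + 1) / 3)
       \<and> (even n \<longrightarrow> real (card (range f)) \<ge> (2 ^ n + 2) / 3)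
       \<and> (odd n \<and> real (card (range f)) = (2 ^ n + 1) / 3 \<longrightarrow>
            (\<exists>y0\<in>range f. omega f y0 = 2 \<and> (\<forall>y\<in>range f - {y0}. omega f y = 3)))
       \<and> (even n \<and> real (card (range f)) = (2 ^ n + 2) / 3 \<longrightarrow>
            ((\<exists>y0\<in>range f. omega f y0 = 1 \<and> (\<forall>y\<in>range f - {y0}. omega f y = 3))
           \<or> (\<exists>y0\<in>range f. \<exists>y1\<in>range f. y0 \<noteq> y1 \<and>
                omega f y0 = 2 \<and> omega f y1 = 2 \<and>
                (\<forall>y\<in>range f - {y0, y1}. omega f y = 3))
           \<or> (\<exists>y0\<in>range f. \<exists>y1\<in>range f. \<exists>y2\<in>range f. \<exists>y3\<in>range f.
                distinct [y0, y1, y2, y3] \<and>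
                omega f y0 = 2 \<and> omega f y1 = 2 \<and> omega f y2 = 2 \<and> omega f y3 = 4 \<and>
                (\<forall>y\<in>range f - {y0, y1, y2, y3}. omega f y = 3))))"
proof -
  have "CHAR('a) = 2"
    using card by (rule CHAR_eq_2_if_card_power_of_2)
  then have "(\<Sum>y\<in>range f. omega f y ^ 2) + 2 \<le> 3 * 2 ^ n"
    using apn_sum_omega_squared_le[OF _ apn] card by simp
  then interpret bounded_second_moment "range f" "omega f" "2 ^ n"
    using sum_omega[of f] card by unfold_locales simp_all
  have real_card:
    "real (card (range f)) \<ge> (2 ^ n + real k) / 3 \<longleftrightarrow> 2 ^ n + k \<le> 3 * card (range f)"
    "real (card (range f)) = (2 ^ n + real k) / 3 \<longleftrightarrow> 3 * card (range f) = 2 ^ n + k"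
    for k :: nat
    by (simp_all add: field_simps
        flip: of_nat_le_iff[where 'a = real] of_nat_eq_iff[where 'a = real])
  have even_card_lower_bound: "2 ^ n + 2 \<le> 3 * card (range f)" if "even n"
    using power_2_mod_3_if_even[OF that] card_lower_bound by presburger
  show ?thesis
    using real_card[of 1] real_card[of 2] card_lower_bound even_card_lower_bound
      equality_case_q_plus_1 equality_case_q_plus_2 by simp
qed

end
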